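(* Let $q$ be a prime power with $q\equiv 3\pmod 4$ and $q>7$, and let $BP(q)$ be the bi-Paley graph. Then any two distinct vertices of the same colour are determined by their $\tfrac14(q-3)$ common neighbours: if $u,v$ and $u',v'$ are two pairs of distinct vertices of the same colour with the same set of common neighbours, then $\{u,v\}=\{u',v'\}$. Equivalently, there are no three distinct vertices of the same colour all adjacent to the common neighbours of two of them.
   Context: Let $\mathbb{F}$ be the field with $q$ elements. The bi-Paley graph $BP(q)$ is the bipartite graph on two copies $\mathbb{F}_\bullet$ and $\mathbb{F}_\circ$ of $\mathbb{F}$, in which $x_\bullet$ is adjacent to $y_\circ$ if and only if $y-x$ is a non-zero square in $\mathbb{F}$. Any two distinct vertices of the same colour in $BP(q)$ have exactly $\tfrac14(q-3)$ common neighbours. *)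

theory Defs
  imports Main
begin

definition nonzero_square :: "'a::field \<Rightarrow> bool" where
  "nonzero_square a \<longleftrightarrow> a \<noteq> 0 \<and> (\<exists>b. a = b ^ 2)"

text \<open>Vertices of BP(q): Inl x is the black copy x_bullet, Inr y the white copy y_circ.
  x_bullet ~ y_circ iff y - x is a non-zero square; the graph is bipartite (undirected).\<close>
fun bp_adj :: "'a::field + 'a \<Rightarrow> 'a + 'a \<Rightarrow> bool" where
  "bp_adj (Inl x) (Inr y) = nonzero_square (y - x)"
| "bp_adj (Inr y) (Inl x) = nonzero_square (y - x)"
| "bp_adj _ _ = False"

definition bp_colour :: "'a + 'a \<Rightarrow> bool" where
  "bp_colour v = isl v"

definition bp_common_nbrs :: "'a::field + 'a \<Rightarrow> 'a + 'a \<Rightarrow> ('a + 'a) set" where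
  "bp_common_nbrs u v = {w. bp_adj u w \<and> bp_adj v w}"

end

theory Submission
  imports Defs
begin

text \<open>Write \<open>N(x, y)\<close> (\<open>sq_nbrs x y\<close>) for the set of \<open>z\<close> with \<open>z - x\<close> and \<open>z - y\<close>
  non-zero squares, so that two black (or two white) vertices have \<open>N(x, y)\<close>, up to
  relabelling, as common neighbours, and \<open>\<chi>\<close> (\<open>qchar\<close>) for the quadratic character.
  Since \<open>-1\<close> is a non-square, an affine map \<open>z \<mapsto> x + d z\<close> with \<open>d\<close> a square reduces
  everything to the following: there is no \<open>w \<notin> {0, 1}\<close> such that \<open>z - w\<close> is a square
  for all \<open>z \<in> N(0, 1)\<close>. All sets \<open>N(x, y)\<close> have \<open>(q - 3)/4\<close> elements, so such a \<open>w\<close>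
  would give \<open>N(0, w) = N(1, w) = N(0, 1)\<close>; by inclusion-exclusion the translates of the
  squares by \<open>0\<close>, \<open>1\<close>, \<open>w\<close> then cover the field and any two of them meet exactly in
  \<open>N(0, 1)\<close>. Hence \<open>\<chi>(z) \<chi>(z - 1) \<chi>(z - w) = 1\<close> off \<open>{0, 1, w}\<close>, and comparing this
  at \<open>z\<close> and \<open>1/z\<close> gives \<open>\<chi>(z - w) \<chi>(z - 1/w) = -1\<close> off \<open>{0, 1, w, 1/w}\<close>. For
  \<open>q > 7\<close> there are enough squares to find such a \<open>z\<close> with \<open>(z - w)(z - 1/w)\<close> a square.\<close>

abbreviation sq :: "'a::field \<Rightarrow> bool" where "sq \<equiv> nonzero_square"

definition qchar :: "'a::field \<Rightarrow> int" where
  "qchar x = (if x = 0 then 0 else if sq x then 1 else -1)"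

definition sq_nbrs :: "'a::field \<Rightarrow> 'a \<Rightarrow> 'a set" where
  "sq_nbrs x y = {z. sq (z - x) \<and> sq (z - y)}"

lemma nonzero_square_nonzero: "sq a \<Longrightarrow> a \<noteq> 0"
  unfolding nonzero_square_def by auto

lemma nonzero_square_one: "sq (1::'a::field)"
  unfolding nonzero_square_def by (auto intro: exI[of _ 1])

lemma nonzero_square_power2: "a \<noteq> 0 \<Longrightarrow> sq (a ^ 2)"
  unfolding nonzero_square_def by auto

lemma nonzero_square_mult: "sq a \<Longrightarrow> sq b \<Longrightarrow> sq (a * b)"
  unfolding nonzero_square_def by (metis mult_eq_0_iff power_mult_distrib)

lemma nonzero_square_mult_iff:
  assumes "sq a" shows "sq (a * b) \<longleftrightarrow> sq b"
proof
  assume "sq (a * b)"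
  then obtain d where d: "a * b = d ^ 2" "a * b \<noteq> 0" unfolding nonzero_square_def by blast
  obtain c where c: "a = c ^ 2" "a \<noteq> 0" using assms unfolding nonzero_square_def by blast
  have "b = (d / c) ^ 2" using c d by (simp add: power_divide field_simps)
  with d show "sq b" unfolding nonzero_square_def by auto
qed (use assms nonzero_square_mult in blast)

lemma nonzero_square_inverse_iff [simp]: "sq (inverse a) \<longleftrightarrow> sq a"
  unfolding nonzero_square_def by (metis inverse_inverse_eq inverse_nonzero_iff_nonzero power_inverse)

lemma qchar_eq_1_iff: "qchar x = 1 \<longleftrightarrow> sq x"
  unfolding qchar_def using nonzero_square_nonzero by auto

lemma qchar_cases: "x \<noteq> 0 \<Longrightarrow> qchar x = 1 \<or> qchar x = -1"
  unfolding qchar_def by auto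

lemma qchar_inverse: "qchar (inverse x) = qchar x"
  unfolding qchar_def by simp

lemma card_square_translate: "card {z::'a::field. sq (z - c)} = card {z::'a. sq z}"
proof -
  have "{z. sq (z - c)} = (\<lambda>z. z + c) ` {z. sq z}"
    by (auto simp: image_iff) (metis diff_add_cancel)
  thus ?thesis by (simp add: card_image)
qed

lemma sq_nbrs_commute: "sq_nbrs x y = sq_nbrs y x"
  unfolding sq_nbrs_def by auto

lemma sq_nbrs_affine:
  assumes "sq (y - x)" shows "sq_nbrs x y = (\<lambda>z. x + (y - x) * z) ` sq_nbrs 0 1"
proof (intro set_eqI iffI)
  let ?d = "y - x"
  have d: "?d \<noteq> 0" using assms by (rule nonzero_square_nonzero)
  fix z' assume "z' \<in> sq_nbrs x y"
  moreover have "z' - x = ?d * ((z' - x) / ?d)" "z' - y = ?d * ((z' - x) / ?d - 1)"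
    using d by (simp_all add: field_simps)
  ultimately have "sq (?d * ((z' - x) / ?d))" "sq (?d * ((z' - x) / ?d - 1))"
    unfolding sq_nbrs_def by simp_all
  hence "sq ((z' - x) / ?d)" "sq ((z' - x) / ?d - 1)"
    by (simp_all only: nonzero_square_mult_iff[OF assms])
  hence "(z' - x) / ?d \<in> sq_nbrs 0 1" unfolding sq_nbrs_def by simp
  moreover have "z' = x + ?d * ((z' - x) / ?d)" using d by simp
  ultimately show "z' \<in> (\<lambda>z. x + ?d * z) ` sq_nbrs 0 1" by blast
next
  fix z' assume "z' \<in> (\<lambda>z. x + (y - x) * z) ` sq_nbrs 0 1"
  then obtain z where "sq z" "sq (z - 1)" "z' = x + (y - x) * z"
    unfolding sq_nbrs_def by auto
  moreover have "z' - x = (y - x) * z" "z' - y = (y - x) * (z - 1)"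
    using calculation(3) by (simp_all add: algebra_simps)
  ultimately show "z' \<in> sq_nbrs x y"
    unfolding sq_nbrs_def by (simp only: nonzero_square_mult_iff[OF assms] mem_Collect_eq)
qed

lemma even_card_involution:
  assumes "finite A" and "\<And>x. x \<in> A \<Longrightarrow> f x \<in> A \<and> f x \<noteq> x \<and> f (f x) = x"
  shows "even (card A)"
  using assms
proof (induction "card A" arbitrary: A rule: less_induct)
  case less
  show ?case
  proof (cases "A = {}")
    case False
    then obtain x where x: "x \<in> A" by blast
    let ?B = "A - {x, f x}"
    have fx: "f x \<in> A" "f x \<noteq> x" using less.prems x by auto
    have card_B: "card ?B = card A - 2" using x fx less.prems(1) by (simp add: card_Diff_subset)
    have "card A \<ge> 2"
      using x fx less.prems(1) by (metis card_2_iff card_mono empty_subsetI insert_subset)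
    moreover have "even (card ?B)"
      using less.prems x card_B calculation
      by (intro less.hyps) (auto, metis)
    ultimately show ?thesis using card_B by (simp add: dvd_diff_nat)
  qed simp
qed

lemma two_nonzero_if_odd_card:
  assumes "odd (card (UNIV :: 'a set))" shows "(2::'a::{finite,field}) \<noteq> 0"
proof
  assume "(2::'a) = 0"
  hence "x + 1 + 1 = x" for x :: 'a by (metis add.assoc add_0_right one_add_one)
  hence "even (card (UNIV :: 'a set))"
    by (intro even_card_involution[where f = "\<lambda>x. x + 1"]) auto
  with assms show False by simp
qed

context
  assumes two_nonzero: "(2::'a::{finite,field}) \<noteq> 0"
begin

lemma neg_neq_self: "(x::'a) \<noteq> 0 \<Longrightarrow> - x \<noteq> x"
  using two_nonzero by (metis mult_2 mult_eq_0_iff neg_eq_iff_add_eq_0)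

lemma card_squares: "2 * card {x::'a. sq x} + 1 = card (UNIV :: 'a set)"
proof -
  let ?S = "{x::'a. sq x}"
  have fibres: "UNIV - {0} = (\<Union>s\<in>?S. {r. r ^ 2 = s})"
    by (auto simp: nonzero_square_def)
  have "card {r. r ^ 2 = s} = 2" if s: "s \<in> ?S" for s
  proof -
    obtain b where b: "s = b ^ 2" using s unfolding nonzero_square_def by auto
    moreover have "b \<noteq> 0" using s b unfolding nonzero_square_def by auto
    ultimately have "{r. r ^ 2 = s} = {b, - b}" by (auto simp: power2_eq_iff)
    with neg_neq_self[OF \<open>b \<noteq> 0\<close>] show ?thesis by auto
  qed
  hence "card (UNIV - {0::'a}) = 2 * card ?S"
    unfolding fibres by (subst card_UN_disjoint) auto
  moreover have "card (UNIV - {0::'a}) = card (UNIV :: 'a set) - 1"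
    by (simp add: card_Diff_singleton)
  moreover have "card (UNIV :: 'a set) > 0" by (rule finite_UNIV_card_ge_0) simp
  ultimately show ?thesis by linarith
qed

lemma nonsquare_mult:
  assumes "a \<noteq> 0" "b \<noteq> 0" "\<not> sq a" "\<not> sq b" shows "sq (a * b :: 'a)"
proof -
  let ?S = "{x::'a. sq x}"
  have "?S \<inter> (*) a ` ?S = {}"
    using assms(3) nonzero_square_mult_iff by (fastforce simp: mult.commute)
  moreover have "card ((*) a ` ?S) = card ?S"
    using assms(1) by (intro card_image) (simp add: inj_on_def)
  ultimately have "card (?S \<union> (*) a ` ?S) = card (UNIV - {0::'a})"
    using card_squares by (simp add: card_Un_disjoint card_Diff_singleton)
  moreover have "?S \<union> (*) a ` ?S \<subseteq> UNIV - {0}"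
    using assms(1) nonzero_square_nonzero by auto
  ultimately have "?S \<union> (*) a ` ?S = UNIV - {0}"
    by (intro card_subset_eq) auto
  then obtain s where "sq s" "b = a * s" using assms(2,4) by blast
  hence "a * b = a ^ 2 * s" by (simp add: power2_eq_square)
  thus ?thesis using nonzero_square_mult[OF nonzero_square_power2 \<open>sq s\<close>] assms(1) by simp
qed

lemma qchar_mult: "qchar (x * y) = qchar x * qchar (y::'a)"
proof (cases "x = 0 \<or> y = 0")
  case False
  have "sq (x * y) \<longleftrightarrow> (sq x \<longleftrightarrow> sq y)"
    using False nonsquare_mult nonzero_square_mult_iff[of x y] nonzero_square_mult_iff[of y x]
    by (auto simp: mult.commute)
  thus ?thesis using False unfolding qchar_def by auto
qed (auto simp: qchar_def)

end

lemma neg_one_not_square: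
  assumes "card (UNIV :: 'a set) mod 4 = 3" shows "\<not> sq (-1::'a::{finite,field})"
proof
  assume minus_one: "sq (-1::'a)"
  have two: "(2::'a) \<noteq> 0" using assms by (intro two_nonzero_if_odd_card) presburger
  have "even (card {x::'a. sq x})"
    using minus_one neg_neq_self[OF two] nonzero_square_mult[OF minus_one] nonzero_square_nonzero
    by (intro even_card_involution[where f = uminus]) auto
  moreover have "even c \<Longrightarrow> 2 * c + 1 = q \<Longrightarrow> q mod 4 \<noteq> 3" for c q :: nat
    by presburger
  ultimately show False using card_squares[OF two] assms by blast
qed

lemma exists_square_product:
  fixes a b c d :: "'a::{finite,field}"
  assumes "card {x::'a. sq x} \<ge> 4"
  shows "\<exists>z. z \<notin> {a, b, c, d} \<and> sq ((z - a) * (z - b))"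
proof (cases "a = b")
  case True
  have "card {x::'a. sq x} < card (UNIV :: 'a set)"
    using nonzero_square_nonzero by (intro psubset_card_mono) auto
  moreover have "card {a, c, d} \<le> 3" by (simp add: card_insert_if)
  ultimately have "\<not> UNIV \<subseteq> {a, c, d}"
    using assms card_mono[of "{a, c, d}" UNIV] by auto
  then obtain z where z: "z \<notin> {a, c, d}" by blast
  hence "sq ((z - a) * (z - a))"
    using nonzero_square_power2[of "z - a"] by (simp add: power2_eq_square)
  with z True show ?thesis by blast
next
  case False
  \<comment> \<open>the solutions of \<open>(z - a) / (z - b) = r\<close> for the squares \<open>r \<noteq> 1\<close>\<close>
  define zr where "zr r = (a - r * b) / (1 - r)" for r :: 'a
  let ?R = "{r. sq r} - {1}"
  have zr_b: "zr r - b = (a - b) / (1 - r)" and zr_a: "zr r - a = r * ((a - b) / (1 - r))"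
    if "r \<noteq> 1" for r
    using that unfolding zr_def by (simp_all add: field_simps)
  have "inj_on zr ?R"
  proof (rule inj_onI)
    fix r s assume "r \<in> ?R" "s \<in> ?R" "zr r = zr s"
    hence "(a - b) / (1 - r) = (a - b) / (1 - s)" using zr_b[of r] zr_b[of s] by auto
    with False \<open>r \<in> ?R\<close> \<open>s \<in> ?R\<close> show "r = s" by (auto simp: field_simps)
  qed
  hence "card (zr ` ?R) = card {r::'a. sq r} - 1"
    by (simp add: card_image nonzero_square_one)
  moreover have "card {c, d} \<le> 2" by (simp add: card_insert_if)
  ultimately have "\<not> zr ` ?R \<subseteq> {c, d}"
    using assms card_mono[of "{c, d}" "zr ` ?R"] by auto
  then obtain r where r: "sq r" "r \<noteq> 1" "zr r \<notin> {c, d}" by blast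
  have "r \<noteq> 0" "(a - b) / (1 - r) \<noteq> 0"
    using r False nonzero_square_nonzero by auto
  hence "zr r \<noteq> a" "zr r \<noteq> b" using zr_a[OF r(2)] zr_b[OF r(2)] by auto
  moreover have "(zr r - a) * (zr r - b) = r * ((a - b) / (1 - r)) ^ 2"
    using zr_a zr_b r(2) by (simp add: power2_eq_square)
  hence "sq ((zr r - a) * (zr r - b))"
    using nonzero_square_mult[OF r(1) nonzero_square_power2] \<open>(a - b) / (1 - r) \<noteq> 0\<close> by simp
  ultimately show ?thesis using r(3) by blast
qed

context
  assumes card_mod_4: "card (UNIV :: 'a::{finite,field} set) mod 4 = 3"
begin

lemma two_nonzero: "(2::'a) \<noteq> 0"
  using card_mod_4 by (intro two_nonzero_if_odd_card) presburger

lemma nonzero_square_uminus_iff: "(x::'a) \<noteq> 0 \<Longrightarrow> sq (- x) \<longleftrightarrow> \<not> sq x"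
  using neg_one_not_square[OF card_mod_4] nonsquare_mult[OF two_nonzero, of "-1" x]
    nonzero_square_mult_iff[of x "-1"]
  by auto

lemma qchar_neg_one: "qchar (-1::'a) = -1"
  unfolding qchar_def using neg_one_not_square[OF card_mod_4] by simp

lemma card_sq_nbrs_eq:
  assumes "x \<noteq> (y::'a)" shows "card (sq_nbrs x y) = card (sq_nbrs 0 (1::'a))"
proof -
  have "card (sq_nbrs x y) = card (sq_nbrs 0 (1::'a))" if "sq (y - x)" for x y :: 'a
  proof -
    have "inj_on (\<lambda>z. x + (y - x) * z) (sq_nbrs 0 1)"
      using nonzero_square_nonzero[OF that] by (auto simp: inj_on_def)
    thus ?thesis unfolding sq_nbrs_affine[OF that] by (rule card_image)
  qed
  moreover have "sq (y - x) \<or> sq (x - y)"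
    using nonzero_square_uminus_iff[of "y - x"] assms by auto
  ultimately show ?thesis using sq_nbrs_commute by metis
qed

lemma sq_nbrs_eq_if_subset:
  assumes "x \<noteq> y" "x' \<noteq> y'" "sq_nbrs x y \<subseteq> sq_nbrs x' (y'::'a)"
  shows "sq_nbrs x y = sq_nbrs x' y'"
proof (rule card_subset_eq)
  show "card (sq_nbrs x y) = card (sq_nbrs x' y')"
    using assms(1,2) card_sq_nbrs_eq by metis
qed (use assms(3) in simp_all)

lemma nonzero_square_inverse_sub_one_iff:
  assumes "sq z" "z \<noteq> (1::'a)" shows "sq (inverse z - 1) \<longleftrightarrow> \<not> sq (z - 1)"
proof -
  have "inverse z - 1 = inverse z * (- (z - 1))"
    using nonzero_square_nonzero[OF assms(1)] by (simp add: field_simps)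
  moreover have "sq (inverse z)" using assms(1) by simp
  ultimately have "sq (inverse z - 1) \<longleftrightarrow> sq (- (z - 1))"
    using nonzero_square_mult_iff by metis
  thus ?thesis using assms(2) nonzero_square_uminus_iff[of "z - 1"] by simp
qed

lemma card_sq_nbrs_01: "2 * card (sq_nbrs 0 (1::'a)) + 1 = card {x::'a. sq x}"
proof -
  let ?A = "sq_nbrs 0 (1::'a)"
  let ?B = "{z::'a. sq z \<and> z \<noteq> 1 \<and> \<not> sq (z - 1)}"
  have A: "?A = {z. sq z \<and> sq (z - 1)}" unfolding sq_nbrs_def by simp
  have "inverse ` ?A = ?B"
  proof (intro set_eqI iffI)
    fix u assume "u \<in> inverse ` ?A"
    then obtain z where z: "sq z" "sq (z - 1)" "u = inverse z" using A by auto
    have "z \<noteq> 1" using nonzero_square_nonzero[OF z(2)] by simp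
    have "sq u" using z by simp
    moreover have "u \<noteq> 1" using \<open>z \<noteq> 1\<close> z(3) by (metis inverse_1 inverse_inverse_eq)
    moreover have "\<not> sq (u - 1)"
      using nonzero_square_inverse_sub_one_iff[OF z(1) \<open>z \<noteq> 1\<close>] z by simp
    ultimately show "u \<in> ?B" by simp
  next
    fix u assume "u \<in> ?B"
    hence u: "sq u" "u \<noteq> 1" "\<not> sq (u - 1)" by simp_all
    have "sq (inverse u)" "sq (inverse u - 1)"
      using u nonzero_square_inverse_sub_one_iff[OF u(1,2)] by simp_all
    hence "inverse u \<in> ?A" unfolding A by simp
    thus "u \<in> inverse ` ?A" by (metis image_eqI inverse_inverse_eq)
  qed
  moreover have "inj_on inverse ?A" by (simp add: inj_on_def)
  ultimately have "card ?B = card ?A" by (metis card_image)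
  moreover have "{x::'a. sq x} = (?A \<union> ?B) \<union> {1}" using A nonzero_square_one by auto
  moreover have "(?A \<union> ?B) \<inter> {1} = {}" "?A \<inter> ?B = {}"
    using A nonzero_square_nonzero by auto
  ultimately show ?thesis by (simp add: card_Un_disjoint)
qed

lemma squares_translates_cover:
  assumes "sq_nbrs 0 w = sq_nbrs 0 (1::'a)" "sq_nbrs 1 w = sq_nbrs 0 (1::'a)"
  shows "sq z \<or> sq (z - 1) \<or> sq (z - w)"
proof -
  let ?X = "{z::'a. sq z}" and ?Y = "{z::'a. sq (z - 1)}" and ?Z = "{z::'a. sq (z - w)}"
  define m where "m = card ?X"
  define t where "t = card (sq_nbrs 0 (1::'a))"
  have card_YZ: "card ?Y = m" "card ?Z = m"
    unfolding m_def by (simp_all only: card_square_translate)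
  have "?X \<inter> ?Y = sq_nbrs 0 1" "?X \<inter> ?Z = sq_nbrs 0 1" "?Y \<inter> ?Z = sq_nbrs 0 1"
    using assms unfolding sq_nbrs_def by auto
  hence "card (?X \<union> ?Y) + t = 2 * m" "card (?X \<union> ?Y \<union> ?Z) + t = card (?X \<union> ?Y) + m"
    using card_Un_Int[of ?X ?Y] card_Un_Int[of "?X \<union> ?Y" ?Z] card_YZ
    unfolding m_def t_def by (simp_all add: Int_Un_distrib2)
  moreover have "2 * t + 1 = m" "2 * m + 1 = card (UNIV :: 'a set)"
    unfolding m_def t_def using card_sq_nbrs_01 card_squares[OF two_nonzero]
    by simp_all
  ultimately have "card (?X \<union> ?Y \<union> ?Z) = card (UNIV :: 'a set)" by linarith
  hence "?X \<union> ?Y \<union> ?Z = UNIV" by (intro card_eq_UNIV_imp_eq_UNIV) simp_all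
  thus ?thesis by blast
qed

lemma qchar_translates_product:
  assumes "sq_nbrs 0 w = sq_nbrs 0 (1::'a)" "sq_nbrs 1 w = sq_nbrs 0 (1::'a)"
    and "z \<notin> {0, 1, w}"
  shows "qchar z * qchar (z - 1) * qchar (z - w) = 1"
proof -
  have "z \<in> sq_nbrs 0 w \<longleftrightarrow> z \<in> sq_nbrs 0 1" "z \<in> sq_nbrs 1 w \<longleftrightarrow> z \<in> sq_nbrs 0 1"
    using assms(1,2) by simp_all
  hence "sq z \<and> sq (z - w) \<longleftrightarrow> sq z \<and> sq (z - 1)" "sq (z - 1) \<and> sq (z - w) \<longleftrightarrow> sq z \<and> sq (z - 1)"
    unfolding sq_nbrs_def by simp_all
  moreover have "z \<noteq> 0" "z - 1 \<noteq> 0" "z - w \<noteq> 0" using assms(3) by auto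
  ultimately show ?thesis
    using squares_translates_cover[OF assms(1,2), of z] unfolding qchar_def by auto
qed

lemma qchar_translates_inverse:
  assumes "sq_nbrs 0 w = sq_nbrs 0 (1::'a)" "sq_nbrs 1 w = sq_nbrs 0 (1::'a)"
    and "w \<noteq> 0" "z \<notin> {0, 1, w, inverse w}"
  shows "qchar (z - w) * qchar (z - inverse w) = -1"
proof -
  have "\<not> sq (0::'a)" "\<not> sq (0 - 1::'a)"
    using nonzero_square_nonzero neg_one_not_square[OF card_mod_4] by auto
  hence "qchar (- w) = 1"
    using squares_translates_cover[OF assms(1,2), of 0] by (simp add: qchar_eq_1_iff)
  have "inverse z \<notin> {0, 1, w}"
    using assms(4) by (simp, metis inverse_1 inverse_inverse_eq)
  hence "qchar (inverse z) * qchar (inverse z - 1) * qchar (inverse z - w) = 1"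
    using qchar_translates_product[OF assms(1,2)] by simp
  moreover have "inverse z - 1 = (- 1) * (z - 1) * inverse z"
    "inverse z - w = (- w) * (z - inverse w) * inverse z"
    using assms(3,4) by (simp_all add: field_simps)
  hence "qchar (inverse z - 1) = - qchar (z - 1) * qchar z"
    "qchar (inverse z - w) = qchar (z - inverse w) * qchar z"
    using \<open>qchar (- w) = 1\<close>
    by (simp_all only: qchar_mult[OF two_nonzero] qchar_neg_one qchar_inverse)
  moreover have "qchar z * qchar (z - 1) * qchar (z - w) = 1"
    using qchar_translates_product[OF assms(1,2)] assms(4) by simp
  moreover have "qchar z \<in> {1, -1}" "qchar (z - 1) \<in> {1, -1}"
    "qchar (z - w) \<in> {1, -1}" "qchar (z - inverse w) \<in> {1, -1}"
    using qchar_cases[of z] qchar_cases[of "z - 1"] qchar_cases[of "z - w"]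
      qchar_cases[of "z - inverse w"] assms(4) by auto
  ultimately show ?thesis by (auto simp: qchar_inverse)
qed

\<comment> \<open>For \<open>q = 7\<close> and \<open>w = 5\<close> the inclusion does hold; \<open>q > 7\<close> is needed only to
  find the point \<open>z\<close>.\<close>
lemma sq_nbrs_01_not_subset:
  assumes "card (UNIV :: 'a set) > 7" "w \<noteq> 0" "w \<noteq> 1"
  shows "\<not> sq_nbrs 0 1 \<subseteq> {z::'a. sq (z - w)}"
proof
  assume "sq_nbrs 0 1 \<subseteq> {z::'a. sq (z - w)}"
  hence "sq_nbrs 0 1 \<subseteq> sq_nbrs 0 w" "sq_nbrs 0 1 \<subseteq> sq_nbrs 1 w"
    unfolding sq_nbrs_def by auto
  hence eqs: "sq_nbrs 0 w = sq_nbrs 0 (1::'a)" "sq_nbrs 1 w = sq_nbrs 0 (1::'a)"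
    using sq_nbrs_eq_if_subset assms(2,3) by (metis zero_neq_one)+
  have "(q::nat) mod 4 = 3 \<Longrightarrow> q > 7 \<Longrightarrow> 2 * m + 1 = q \<Longrightarrow> m \<ge> 4" for q m
    by presburger
  hence "card {x::'a. sq x} \<ge> 4"
    using card_mod_4 assms(1) card_squares[OF two_nonzero] by blast
  then obtain z where z: "z \<notin> {w, inverse w, 0, 1}" "sq ((z - w) * (z - inverse w))"
    using exists_square_product by blast
  hence "qchar (z - w) * qchar (z - inverse w) = 1"
    by (simp add: qchar_eq_1_iff flip: qchar_mult[OF two_nonzero])
  moreover have "qchar (z - w) * qchar (z - inverse w) = -1"
    using qchar_translates_inverse[OF eqs assms(2)] z(1) by auto
  ultimately show False by simp
qed

lemma sq_nbrs_not_subset: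
  assumes "card (UNIV :: 'a set) > 7" "x \<noteq> y" "w \<notin> {x, y}"
  shows "\<not> sq_nbrs x y \<subseteq> {z::'a. sq (z - w)}"
proof -
  have "\<not> sq_nbrs x y \<subseteq> {z::'a. sq (z - w)}" if "sq (y - x)" "w \<notin> {x, y}" for x y
  proof
    assume sub: "sq_nbrs x y \<subseteq> {z::'a. sq (z - w)}"
    define w0 where "w0 = (w - x) / (y - x)"
    have "y - x \<noteq> 0" using that(1) by (rule nonzero_square_nonzero)
    hence "w0 \<noteq> 0" "w0 \<noteq> 1" using that(2) unfolding w0_def by (auto simp: field_simps)
    moreover have "sq_nbrs 0 1 \<subseteq> {z. sq (z - w0)}"
    proof
      fix z :: 'a assume "z \<in> sq_nbrs 0 1"
      hence "sq (x + (y - x) * z - w)" using sub unfolding sq_nbrs_affine[OF that(1)] by blast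
      moreover have "x + (y - x) * z - w = (y - x) * (z - w0)"
        using \<open>y - x \<noteq> 0\<close> unfolding w0_def by (simp add: field_simps)
      ultimately show "z \<in> {z. sq (z - w0)}" using nonzero_square_mult_iff[OF that(1)] by simp
    qed
    ultimately show False using sq_nbrs_01_not_subset assms(1) by blast
  qed
  moreover have "sq (y - x) \<or> sq (x - y)"
    using nonzero_square_uminus_iff[of "y - x"] assms(2) by auto
  ultimately show ?thesis using assms(3) sq_nbrs_commute by (metis insert_commute)
qed

lemma sq_nbrs_eq_imp_doubleton_eq:
  assumes "card (UNIV :: 'a set) > 7" "x \<noteq> y" "x' \<noteq> y'" "sq_nbrs x y = sq_nbrs x' (y'::'a)"
  shows "{x, y} = {x', y'}"
proof -
  have "sq_nbrs x y \<subseteq> {z. sq (z - x')}" "sq_nbrs x y \<subseteq> {z. sq (z - y')}"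
    using assms(4) unfolding sq_nbrs_def by auto
  hence "x' \<in> {x, y}" "y' \<in> {x, y}" using sq_nbrs_not_subset assms(1,2) by blast+
  with assms(2,3) show ?thesis by auto
qed

lemma sq_nbrs_nonempty:
  assumes "card (UNIV :: 'a set) > 7" "x \<noteq> (y::'a)"
  shows "sq_nbrs x y \<noteq> {}"
proof -
  have "card (sq_nbrs 0 (1::'a)) > 0"
    using card_sq_nbrs_01 card_squares[OF two_nonzero] assms(1)
    by linarith
  thus ?thesis using card_sq_nbrs_eq[OF assms(2)] by auto
qed

end

\<comment> \<open>\<open>Inr (- x)\<close> rather than \<open>Inr x\<close>: the map \<open>Inl x \<mapsto> Inr (- x)\<close>, \<open>Inr y \<mapsto> Inl (- y)\<close>
  is an automorphism of \<open>BP(q)\<close> swapping the colours, and with this labelling the common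
  neighbours of two vertices of either colour are described by \<open>sq_nbrs\<close> in the same way.\<close>
definition bp_vertex :: "bool \<Rightarrow> 'a::field \<Rightarrow> 'a + 'a" where
  "bp_vertex c x = (if c then Inl x else Inr (- x))"

lemma bp_vertex_eq_iff: "bp_vertex c x = bp_vertex c' x' \<longleftrightarrow> c = c' \<and> x = x'"
  unfolding bp_vertex_def by auto

lemma bp_same_colour_cases:
  fixes u v :: "'a::field + 'a"
  assumes "bp_colour u = bp_colour v"
  obtains c x y where "u = bp_vertex c x" "v = bp_vertex c y"
proof -
  have ex: "\<exists>x. w = bp_vertex (bp_colour w) (x::'a)" for w
  proof (cases w)
    case (Inr a)
    thus ?thesis unfolding bp_vertex_def bp_colour_def by (intro exI[of _ "- a"]) simp
  qed (simp add: bp_vertex_def bp_colour_def)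
  from ex[of u] obtain x where x: "u = bp_vertex (bp_colour u) x" ..
  from ex[of v] obtain y where "v = bp_vertex (bp_colour v) y" ..
  hence "v = bp_vertex (bp_colour u) y" by (simp only: assms)
  with x show ?thesis by (rule that)
qed

lemma bp_common_nbrs_bp_vertex:
  "bp_common_nbrs (bp_vertex c x) (bp_vertex c y) = (\<lambda>z. bp_vertex (\<not> c) (- z)) ` sq_nbrs x y"
proof (intro set_eqI iffI)
  fix v assume v: "v \<in> bp_common_nbrs (bp_vertex c x) (bp_vertex c y)"
  define z where "z = (case v of Inl a \<Rightarrow> - a | Inr a \<Rightarrow> a)"
  have "z \<in> sq_nbrs x y \<and> v = bp_vertex (\<not> c) (- z)"
    using v unfolding z_def bp_common_nbrs_def bp_vertex_def sq_nbrs_def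
    by (cases v; cases c) (auto simp: minus_diff_commute)
  thus "v \<in> (\<lambda>z. bp_vertex (\<not> c) (- z)) ` sq_nbrs x y" by blast
next
  fix v assume "v \<in> (\<lambda>z. bp_vertex (\<not> c) (- z)) ` sq_nbrs x y"
  thus "v \<in> bp_common_nbrs (bp_vertex c x) (bp_vertex c y)"
    unfolding bp_common_nbrs_def bp_vertex_def sq_nbrs_def
    by (cases c) (auto simp: algebra_simps)
qed

lemma bp_common_nbrs_eq_imp_sq_nbrs_eq:
  assumes "sq_nbrs x y \<noteq> {}"
    and "bp_common_nbrs (bp_vertex c x) (bp_vertex c y) =
         bp_common_nbrs (bp_vertex c' x') (bp_vertex c' y')"
  shows "c = c'" and "sq_nbrs x y = sq_nbrs x' y'"
proof -
  let ?f = "\<lambda>c z. bp_vertex (\<not> c) (- z :: 'a::field)"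
  have images: "?f c ` sq_nbrs x y = ?f c' ` sq_nbrs x' y'"
    using assms(2) by (simp add: bp_common_nbrs_bp_vertex)
  obtain z where "z \<in> sq_nbrs x y" using assms(1) by blast
  then obtain z' where "?f c z = ?f c' z'" using images by blast
  thus "c = c'" by (simp add: bp_vertex_eq_iff)
  moreover have "inj (?f c)" by (simp add: inj_def bp_vertex_eq_iff)
  ultimately show "sq_nbrs x y = sq_nbrs x' y'" using images by (simp add: inj_image_eq_iff)
qed

theorem mainTheorem10:
  fixes u v u' v' :: "'a::{finite,field} + 'a"
  assumes "card (UNIV :: 'a set) mod 4 = 3"
    and "card (UNIV :: 'a set) > 7"
    and "u \<noteq> v" and "bp_colour u = bp_colour v"
    and "u' \<noteq> v'" and "bp_colour u' = bp_colour v'"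
    and "bp_common_nbrs u v = bp_common_nbrs u' v'"
  shows "{u, v} = {u', v'}"
proof -
  obtain c x y where uv: "u = bp_vertex c x" "v = bp_vertex c y"
    using assms(4) by (rule bp_same_colour_cases)
  obtain c' x' y' where uv': "u' = bp_vertex c' x'" "v' = bp_vertex c' y'"
    using assms(6) by (rule bp_same_colour_cases)
  have "x \<noteq> y" "x' \<noteq> y'" using assms(3,5) uv uv' by auto
  have "c = c'" "sq_nbrs x y = sq_nbrs x' y'"
    using bp_common_nbrs_eq_imp_sq_nbrs_eq sq_nbrs_nonempty[OF assms(1,2) \<open>x \<noteq> y\<close>]
      assms(7) uv uv' by blast+
  hence "bp_vertex c ` {x, y} = bp_vertex c' ` {x', y'}"
    using sq_nbrs_eq_imp_doubleton_eq[OF assms(1,2) \<open>x \<noteq> y\<close> \<open>x' \<noteq> y'\<close>] by simp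
  thus ?thesis using uv uv' by simp
qed

end
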